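(* Let $n\ge2$, let $\lambda_1\ge\dots\ge\lambda_n$ be real numbers, and let $\mu_1\ge\dots\ge\mu_{n-1}$ be the critical points (roots of the derivative, with multiplicity) of $q(x)=\prod_{j=1}^n(x-\lambda_j)$. Then for all integers $1\le\ell\le r\le n-1$, $$\sum_{j=\ell}^r\lambda_{j+1}+\frac{1}{r+1}\sum_{j=\ell}^r(\lambda_\ell-\lambda_{j+1})\le\sum_{j=\ell}^r\mu_j\le\sum_{j=\ell}^r\lambda_j-\frac{1}{n-\ell+1}\sum_{j=\ell}^r(\lambda_j-\lambda_{r+1}).$$ Equivalently, $$\frac{r}{r+1}\sum_{j=\ell}^r\lambda_{j+1}+\frac{r-\ell+1}{r+1}\lambda_\ell\le\sum_{j=\ell}^r\mu_j\le\frac{n-\ell}{n-\ell+1}\sum_{j=\ell}^r\lambda_j+\frac{r-\ell+1}{n-\ell+1}\lambda_{r+1}.$$ *)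

theory Defs
  imports "HOL-Analysis.Analysis" "HOL-Computational_Algebra.Polynomial"
begin

end

(*
  The critical points interlace the roots: Rolle's theorem gives one in every gap between
  distinct roots, a root of multiplicity e is a critical point of multiplicity e - 1, and
  counting shows that these are all of them.  On a gap (lam (j+1), lam j) the logarithmic
  derivative q'/q t = (SUM k. 1 / (t - lam k)) is strictly decreasing and vanishes at mu j, so
  t <= mu j iff q'/q t >= 0.  Hence moving the roots so that q'/q decreases (increases) on the
  gap moves mu j down (up).  For the lower bound q is compared with the polynomial with roots
  lam l (l times), lam (l+1), ..., lam (r+1); for the upper bound with the one with roots
  lam l, ..., lam r and lam (r+1) (n - r times).  The sums of the critical points of these
  comparison polynomials are computed by Vieta (the m - 1 critical points of a degree m
  polynomial sum to (m - 1)/m times the sum of its roots) and interlacing.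
*)
theory Submission
  imports Defs
begin

lemma sum_atLeastAtMost_split:
  fixes f :: "nat \<Rightarrow> 'a :: comm_monoid_add"
  assumes "m \<le> k + 1" "k \<le> n"
  shows "(\<Sum>i=m..n. f i) = (\<Sum>i=m..k. f i) + (\<Sum>i=k+1..n. f i)"
  using sum.ub_add_nat[OF assms(1), of f "n - k"] assms(2) by simp

lemma prod_linear_nonzero: "(\<Prod>k\<in>A. [:- c k, 1:]) \<noteq> (0 :: 'a :: idom poly)"
  by (cases "finite A") auto

lemma poly_prod_linear_eq_0_iff:
  fixes c :: "'b \<Rightarrow> 'a :: idom"
  assumes "finite A"
  shows "poly (\<Prod>k\<in>A. [:- c k, 1:]) x = 0 \<longleftrightarrow> (\<exists>k\<in>A. x = c k)"
  using assms by (simp add: poly_prod)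

lemma degree_prod_linear:
  fixes c :: "'b \<Rightarrow> 'a :: idom"
  assumes "finite A"
  shows "degree (\<Prod>k\<in>A. [:- c k, 1:]) = card A"
  using assms by (subst degree_prod_eq_sum_degree) auto

lemma lead_coeff_prod_linear: "lead_coeff (\<Prod>k\<in>A. [:- c k, 1:]) = (1 :: 'a :: idom)"
  by (simp add: lead_coeff_prod)

lemma coeff_prod_linear_second:
  fixes c :: "'b \<Rightarrow> 'a :: idom"
  assumes "finite A" "A \<noteq> {}"
  shows "coeff (\<Prod>k\<in>A. [:- c k, 1:]) (card A - 1) = - (\<Sum>k\<in>A. c k)"
  using assms
proof (induction A rule: finite_ne_induct)
  case (singleton a)
  then show ?case by simp
next
  case (insert a A)
  let ?P = "\<Prod>k\<in>A. [:- c k, 1:]"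
  have "coeff ?P (card A) = 1"
    using lead_coeff_prod_linear[of c A] degree_prod_linear[OF insert.hyps(1), of c] by simp
  moreover have "card A \<noteq> 0" using insert.hyps by simp
  ultimately show ?case
    using insert by (cases "card A") (auto simp: coeff_pCons algebra_simps)
qed

lemma order_prod_linear:
  fixes c :: "'b \<Rightarrow> 'a :: idom"
  assumes "finite A"
  shows "order x (\<Prod>k\<in>A. [:- c k, 1:]) = card {k\<in>A. c k = x}"
proof -
  have "order x (\<Prod>k\<in>A. [:- c k, 1:]) = count (proots (\<Prod>k\<in>A. [:- c k, 1:])) x"
    by (simp add: prod_linear_nonzero)
  also have "\<dots> = (\<Sum>k\<in>A. if c k = x then 1 else 0)"
    by (auto simp: proots_prod count_sum intro!: sum.cong)
  also have "\<dots> = card {k\<in>A. c k = x}"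
    using assms by (simp add: sum.If_cases Int_def)
  finally show ?thesis .
qed

lemma poly_pderiv_prod_linear:
  fixes c :: "'b \<Rightarrow> 'a :: field"
  assumes "finite A" and nonzero: "poly (\<Prod>k\<in>A. [:- c k, 1:]) t \<noteq> 0"
  shows "poly (pderiv (\<Prod>k\<in>A. [:- c k, 1:])) t
       = poly (\<Prod>k\<in>A. [:- c k, 1:]) t * (\<Sum>k\<in>A. 1 / (t - c k))"
proof -
  have factor: "poly (\<Prod>k\<in>A. [:- c k, 1:]) t = (t - c a) * poly (\<Prod>k\<in>A - {a}. [:- c k, 1:]) t"
    if "a \<in> A" for a
    using that assms(1) by (simp add: poly_prod prod.remove algebra_simps)
  have "poly (pderiv (\<Prod>k\<in>A. [:- c k, 1:])) t = (\<Sum>a\<in>A. poly (\<Prod>k\<in>A - {a}. [:- c k, 1:]) t)"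
    by (simp add: pderiv_prod poly_sum pderiv_pCons)
  also have "\<dots> = (\<Sum>a\<in>A. poly (\<Prod>k\<in>A. [:- c k, 1:]) t * (1 / (t - c a)))"
    using nonzero by (intro sum.cong) (auto simp: factor)
  finally show ?thesis by (simp add: sum_distrib_left)
qed

lemma prod_linear_dvd_if_order_le:
  fixes c :: "'b \<Rightarrow> 'a :: idom"
  assumes "finite A" "\<And>x. card {k\<in>A. c k = x} \<le> order x R"
  shows "(\<Prod>k\<in>A. [:- c k, 1:]) dvd R"
proof (cases "R = 0")
  case False
  from assms False show ?thesis
  proof (induction A rule: finite_induct)
    case empty
    then show ?case by simp
  next
    case (insert i A)
    note order_R = insert.prems(1)
    have "card {k\<in>A. c k = x} \<le> order x R" for x
      using insert.hyps order_R[of x] card_mono[of "{k\<in>insert i A. c k = x}" "{k\<in>A. c k = x}"]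
      by fastforce
    with insert obtain S where S: "R = (\<Prod>k\<in>A. [:- c k, 1:]) * S"
      by (auto elim: dvdE)
    have "S \<noteq> 0" using S insert.prems(2) by auto
    have "{k\<in>insert i A. c k = c i} = insert i {k\<in>A. c k = c i}" by auto
    then have "card {k\<in>insert i A. c k = c i} = Suc (card {k\<in>A. c k = c i})"
      using insert.hyps by simp
    moreover have "order (c i) R = card {k\<in>A. c k = c i} + order (c i) S"
      using S \<open>S \<noteq> 0\<close> insert.hyps by (simp add: order_mult prod_linear_nonzero order_prod_linear)
    ultimately have "order (c i) S \<noteq> 0"
      using order_R[of "c i"] by linarith
    then have "[:- c i, 1:] dvd S"
      using \<open>S \<noteq> 0\<close> by (simp add: dvd_iff_poly_eq_0 order_root)
    then show ?case
      unfolding prod.insert[OF insert.hyps] S by (metis mult.commute mult_dvd_mono dvd_refl)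
  qed
qed simp

lemma eq_smult_prod_linear_if_dvd:
  fixes c :: "'b \<Rightarrow> 'a :: idom"
  assumes "(\<Prod>k\<in>A. [:- c k, 1:]) dvd R" "finite A" "degree R = card A" "R \<noteq> 0"
  shows "R = smult (lead_coeff R) (\<Prod>k\<in>A. [:- c k, 1:])"
proof -
  obtain S where S: "R = (\<Prod>k\<in>A. [:- c k, 1:]) * S" using assms(1) by (elim dvdE)
  have "S \<noteq> 0" using S assms(4) by auto
  then have "degree S = 0"
    using S assms(2,3) by (simp add: degree_mult_eq prod_linear_nonzero degree_prod_linear)
  then have "S = [:lead_coeff S:]" by (simp add: degree_0_id)
  moreover have "lead_coeff R = lead_coeff S"
    using S by (simp add: lead_coeff_mult lead_coeff_prod_linear)
  ultimately show ?thesis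
    using S by (metis mult.commute smult_one mult_smult_left mult.left_neutral)
qed

lemma antimono_eq_if_prod_linear_eq:
  fixes a b :: "nat \<Rightarrow> 'a :: linordered_idom"
  assumes "antimono_on {1..M} a" "antimono_on {1..M} b"
    and "(\<Prod>k=1..M. [:- a k, 1:]) = (\<Prod>k=1..M. [:- b k, 1:])"
    and "j \<in> {1..M}"
  shows "a j = b j"
proof -
  have mset_eq: "proots (\<Prod>k=1..M. [:- f k, 1:]) = mset (rev (map f [1..<Suc M]))"
    for f :: "nat \<Rightarrow> 'a"
  proof -
    have "proots (\<Prod>k=1..M. [:- f k, 1:]) = (\<Sum>k=1..M. {#f k#})"
      by (simp add: proots_prod)
    also have "\<dots> = mset (map f [1..<Suc M])"
      by (induction M) (auto simp: atLeastLessThanSuc)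
    finally show ?thesis by simp
  qed
  have sorted: "sorted (rev (map f [1..<Suc M]))" if "antimono_on {1..M} f" for f :: "nat \<Rightarrow> 'a"
  proof -
    have "sorted_wrt (\<lambda>i k. f k \<le> f i) [1..<Suc M]"
      by (rule sorted_wrt_mono_rel[OF _ sorted_wrt_upt]) (use that in \<open>auto simp: monotone_on_def\<close>)
    then show ?thesis by (simp add: sorted_wrt_rev sorted_wrt_map)
  qed
  have "rev (map a [1..<Suc M]) = rev (map b [1..<Suc M])"
    using properties_for_sort[OF _ sorted[OF assms(1)]] properties_for_sort[OF _ sorted[OF assms(2)]]
      mset_eq[of a] mset_eq[of b] assms(3) by metis
  then show ?thesis
    using assms(4) by (simp add: map_eq_conv) (metis le_neq_implies_less)
qed

definition interlacing :: "nat \<Rightarrow> (nat \<Rightarrow> real) \<Rightarrow> (nat \<Rightarrow> real) \<Rightarrow> bool" where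
  "interlacing m c p \<longleftrightarrow> (\<forall>k\<in>{1..m-1}. c (Suc k) \<le> p k \<and> p k \<le> c k)"

definition critical_points :: "nat \<Rightarrow> (nat \<Rightarrow> real) \<Rightarrow> (nat \<Rightarrow> real) \<Rightarrow> bool" where
  "critical_points m c p \<longleftrightarrow>
     pderiv (\<Prod>k=1..m. [:- c k, 1:]) = smult (of_nat m) (\<Prod>k=1..m-1. [:- p k, 1:])"

lemma antimono_gap_index_unique:
  fixes c :: "nat \<Rightarrow> 'a :: linorder"
  assumes mono: "antimono_on {1..m} c" and j: "j \<in> {1..m-1}" and k: "k \<in> {1..m-1}"
    and "c (Suc j) < x" "x < c j" "c (Suc k) \<le> x" "x \<le> c k"
  shows "k = j"
proof (rule linorder_cases[of k j])
  assume "k < j"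
  then have "c j \<le> c (Suc k)" using j k monotone_onD[OF mono, of "Suc k" j] by simp
  then show ?thesis using assms by simp
next
  assume "j < k"
  then have "c k \<le> c (Suc j)" using j k monotone_onD[OF mono, of "Suc j" k] by simp
  then show ?thesis using assms by simp
qed

lemma antimono_outside_gap:
  fixes c :: "nat \<Rightarrow> 'a :: linorder"
  assumes mono: "antimono_on {1..m} c" and j: "j \<in> {1..m-1}" and i: "i \<in> {1..m}"
  shows "c i \<le> c (Suc j) \<or> c j \<le> c i"
proof (cases "i \<le> j")
  case True
  then show ?thesis using i j monotone_onD[OF mono, of i j] by simp
next
  case False
  then show ?thesis using i j monotone_onD[OF mono, of "Suc j" i] by simp
qed

lemma interlacing_antimono:
  assumes mono: "antimono_on {1..m} c" and "interlacing m c p"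
  shows "antimono_on {1..m-1} p"
proof (rule monotone_onI)
  fix i j assume ij: "i \<in> {1..m-1}" "j \<in> {1..m-1}" "i \<le> j"
  show "p j \<le> p i"
  proof (cases "i = j")
    case False
    then have "c j \<le> c (Suc i)" using ij monotone_onD[OF mono, of "Suc i" j] by simp
    moreover have "p j \<le> c j" "c (Suc i) \<le> p i"
      using ij \<open>interlacing m c p\<close> by (auto simp: interlacing_def)
    ultimately show ?thesis by linarith
  qed simp
qed

lemma poly_pderiv_root_between:
  fixes Q :: "real poly"
  assumes "a < b" "poly Q a = 0" "poly Q b = 0"
  obtains x where "a < x" "x < b" "poly (pderiv Q) x = 0"
  using poly_MVT[OF assms(1), of Q] assms by auto

lemma card_adjacent_repeats_le:
  "card {k\<in>{1..m-1}. c k = x \<and> c (Suc k) = x} \<le> card {i\<in>{1..m}. c i = x} - 1"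
proof (cases "{i\<in>{1..m}. c i = x} = {}")
  case False
  define E where "E = {i\<in>{1..m}. c i = x}"
  have "finite E" "E \<noteq> {}" using False by (simp_all add: E_def)
  have "{k\<in>{1..m-1}. c k = x \<and> c (Suc k) = x} \<subseteq> E - {Max E}"
  proof
    fix k assume "k \<in> {k\<in>{1..m-1}. c k = x \<and> c (Suc k) = x}"
    then have "k \<in> E" "Suc k \<in> E" by (auto simp: E_def)
    then show "k \<in> E - {Max E}" using Max_ge[OF \<open>finite E\<close>, of "Suc k"] by auto
  qed
  then have "card {k\<in>{1..m-1}. c k = x \<and> c (Suc k) = x} \<le> card (E - {Max E})"
    using \<open>finite E\<close> by (intro card_mono) auto
  also have "\<dots> = card E - 1"
    using \<open>finite E\<close> \<open>E \<noteq> {}\<close> by (simp add: card_Diff_singleton)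
  finally show ?thesis by (simp add: E_def)
next
  case True
  then have "{k\<in>{1..m-1}. c k = x \<and> c (Suc k) = x} = {}" by auto
  then show ?thesis unfolding \<open>{k\<in>{1..m-1}. c k = x \<and> c (Suc k) = x} = {}\<close> by simp
qed

lemma card_gap_fiber_le_one:
  fixes c p :: "nat \<Rightarrow> 'a :: linorder"
  assumes mono: "antimono_on {1..m} c"
    and gap: "\<And>k. k \<in> {1..m-1} \<Longrightarrow> p k = x \<Longrightarrow> c (Suc k) < x \<and> x < c k"
  shows "card {k\<in>{1..m-1}. p k = x} \<le> 1"
proof -
  have "k' = k" if "k \<in> {k\<in>{1..m-1}. p k = x}" "k' \<in> {k\<in>{1..m-1}. p k = x}" for k k'
    using antimono_gap_index_unique[OF mono, of k k' x] gap that by fastforce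
  then show ?thesis by (simp add: card_le_Suc0_iff_eq)
qed

(* A root x of Q of multiplicity e can only be chosen by the e - 1 gaps collapsed at x;
   any other value lies in at most one open gap. *)
lemma card_critical_choice_le_order:
  fixes m :: nat and c p :: "nat \<Rightarrow> real"
  defines "Q \<equiv> \<Prod>k=1..m. [:- c k, 1:]"
  assumes mono: "antimono_on {1..m} c"
    and choice: "\<And>k. k \<in> {1..m-1} \<Longrightarrow>
      (c (Suc k) < p k \<and> p k < c k \<and> poly (pderiv Q) (p k) = 0) \<or> (p k = c k \<and> c (Suc k) = c k)"
  shows "card {k\<in>{1..m-1}. p k = x} \<le> order x (pderiv Q)"
proof (cases "\<exists>i\<in>{1..m}. c i = x")
  case True
  then obtain i where i: "i \<in> {1..m}" "c i = x" by blast
  have "{k\<in>{1..m-1}. p k = x} \<subseteq> {k\<in>{1..m-1}. c k = x \<and> c (Suc k) = x}"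
  proof
    fix k assume k: "k \<in> {k\<in>{1..m-1}. p k = x}"
    then have "k \<in> {1..m-1}" by simp
    then have "\<not> (c (Suc k) < x \<and> x < c k)"
      using antimono_outside_gap[OF mono _ i(1)] i(2) by force
    then show "k \<in> {k\<in>{1..m-1}. c k = x \<and> c (Suc k) = x}" using choice[of k] k by auto
  qed
  then have "card {k\<in>{1..m-1}. p k = x} \<le> card {k\<in>{1..m-1}. c k = x \<and> c (Suc k) = x}"
    by (intro card_mono) simp_all
  also have "\<dots> \<le> card {i\<in>{1..m}. c i = x} - 1"
    by (rule card_adjacent_repeats_le)
  also have "card {i\<in>{1..m}. c i = x} = order x Q"
    by (simp add: Q_def order_prod_linear)
  also have "order x Q = Suc (order x (pderiv Q))"
  proof (rule order_pderiv)
    show "Q \<noteq> 0" by (simp add: Q_def prod_linear_nonzero)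
    show "poly Q x = 0" using i by (auto simp: Q_def poly_prod_linear_eq_0_iff)
  qed
  finally show ?thesis by simp
next
  case False
  have gap: "c (Suc k) < x \<and> x < c k \<and> poly (pderiv Q) x = 0" if k: "k \<in> {1..m-1}" "p k = x" for k
  proof -
    have "k \<in> {1..m}" using k by auto
    with False have "c k \<noteq> x" by blast
    then show ?thesis using choice[OF k(1)] k(2) by auto
  qed
  show ?thesis
  proof (cases "{k\<in>{1..m-1}. p k = x} = {}")
    case False
    then obtain k where k: "k \<in> {1..m-1}" "p k = x" by auto
    then have "pderiv Q \<noteq> 0"
      by (auto simp: Q_def pderiv_eq_0_iff degree_prod_linear)
    then have "1 \<le> order x (pderiv Q)"
      using order_gt_0_iff[of "pderiv Q" x] gap[OF k] by linarith
    moreover have "card {k\<in>{1..m-1}. p k = x} \<le> 1"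
      using gap by (intro card_gap_fiber_le_one[OF mono]) blast
    ultimately show ?thesis by linarith
  next
    case True
    show ?thesis unfolding True by simp
  qed
qed

lemma critical_points_if_dvd_pderiv:
  assumes "(\<Prod>k=1..m-1. [:- p k, 1:]) dvd pderiv (\<Prod>k=1..m. [:- c k, 1:])"
  shows "critical_points m c p"
proof (cases "m = 0")
  case False
  define Q where "Q = (\<Prod>k=1..m. [:- c k, 1:])"
  have "degree Q = m" "lead_coeff Q = 1"
    unfolding Q_def by (simp add: degree_prod_linear, simp only: lead_coeff_prod_linear)
  then have "degree (pderiv Q) = m - 1" "lead_coeff (pderiv Q) = of_nat m"
    using False by (simp_all add: degree_pderiv coeff_pderiv)
  moreover have "pderiv Q \<noteq> 0"
    using False \<open>degree Q = m\<close> by (simp add: pderiv_eq_0_iff)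
  ultimately have "pderiv Q = smult (of_nat m) (\<Prod>k=1..m-1. [:- p k, 1:])"
    using eq_smult_prod_linear_if_dvd[OF assms[folded Q_def]] by simp
  then show ?thesis by (simp only: critical_points_def Q_def)
qed (simp add: critical_points_def)

lemma critical_points_exist:
  assumes mono: "antimono_on {1..m} c"
  obtains p where "interlacing m c p" "critical_points m c p"
proof -
  define Q where "Q = (\<Prod>k=1..m. [:- c k, 1:])"
  \<comment> \<open>Rolle in each proper gap; a collapsed gap sits on a multiple root of Q, hence of Q'.\<close>
  define p where "p k = (if c (Suc k) < c k
      then SOME x. c (Suc k) < x \<and> x < c k \<and> poly (pderiv Q) x = 0 else c k)" for k
  have choice: "(c (Suc k) < p k \<and> p k < c k \<and> poly (pderiv Q) (p k) = 0)
      \<or> (p k = c k \<and> c (Suc k) = c k)"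
    if k: "k \<in> {1..m-1}" for k
  proof (cases "c (Suc k) < c k")
    case True
    have "poly Q (c k) = 0" "poly Q (c (Suc k)) = 0"
      using k by (auto simp: Q_def poly_prod_linear_eq_0_iff)
    then obtain x where "c (Suc k) < x \<and> x < c k \<and> poly (pderiv Q) x = 0"
      using poly_pderiv_root_between[OF True] by blast
    from someI[of "\<lambda>x. c (Suc k) < x \<and> x < c k \<and> poly (pderiv Q) x = 0", OF this]
    show ?thesis using True by (simp add: p_def)
  next
    case False
    moreover have "Suc k \<le> m" using k by auto
    ultimately show ?thesis using k monotone_onD[OF mono, of k "Suc k"] by (auto simp: p_def)
  qed
  have "interlacing m c p"
    unfolding interlacing_def
  proof
    fix k assume "k \<in> {1..m-1}"
    with choice[OF this] show "c (Suc k) \<le> p k \<and> p k \<le> c k" by auto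
  qed
  moreover have "card {k\<in>{1..m-1}. p k = x} \<le> order x (pderiv Q)" for x
    using choice by (rule card_critical_choice_le_order[OF mono, of p, folded Q_def])
  then have "(\<Prod>k=1..m-1. [:- p k, 1:]) dvd pderiv Q"
    by (intro prod_linear_dvd_if_order_le) simp_all
  then have "critical_points m c p"
    unfolding Q_def by (rule critical_points_if_dvd_pderiv)
  ultimately show ?thesis by (rule that)
qed

lemma critical_points_interlacing:
  assumes "antimono_on {1..m} c" "antimono_on {1..m-1} p" "critical_points m c p"
  shows "interlacing m c p"
proof -
  obtain p' where p': "interlacing m c p'" "critical_points m c p'"
    using critical_points_exist[OF assms(1)] .
  show ?thesis
  proof (cases "m = 0")
    case False
    have "smult (of_nat m) (\<Prod>k=1..m-1. [:- p k, 1:]) = smult (of_nat m) (\<Prod>k=1..m-1. [:- p' k, 1:])"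
      using assms(3) p'(2) by (simp add: critical_points_def)
    moreover have "of_nat m \<noteq> (0 :: real)" using False by simp
    ultimately have "(\<Prod>k=1..m-1. [:- p k, 1:]) = (\<Prod>k=1..m-1. [:- p' k, 1:])"
      by (rule smult_cancel[rotated])
    then have "p k = p' k" if "k \<in> {1..m-1}" for k
      using antimono_eq_if_prod_linear_eq[OF assms(2) interlacing_antimono[OF assms(1) p'(1)] _ that]
      by simp
    then show ?thesis using p'(1) by (simp add: interlacing_def)
  qed (simp add: interlacing_def)
qed

lemma sum_critical_points:
  assumes "critical_points m c p" "m \<ge> 2"
  shows "(\<Sum>k=1..m-1. p k) = (real m - 1) / real m * (\<Sum>k=1..m. c k)"
proof -
  have "coeff (pderiv (\<Prod>k=1..m. [:- c k, 1:])) (m - 2) = of_nat (m - 1) * - (\<Sum>k=1..m. c k)"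
    using coeff_prod_linear_second[of "{1..m}" c] assms(2)
    by (simp add: coeff_pderiv Suc_diff_Suc numeral_2_eq_2)
  moreover have "coeff (smult (of_nat m) (\<Prod>k=1..m-1. [:- p k, 1:])) (m - 2)
      = of_nat m * - (\<Sum>k=1..m-1. p k)"
    using coeff_prod_linear_second[of "{1..m-1}" p] assms(2) by (simp add: numeral_2_eq_2)
  ultimately have "(real m - 1) * (\<Sum>k=1..m. c k) = real m * (\<Sum>k=1..m-1. p k)"
    using assms by (simp add: critical_points_def of_nat_diff)
  then show ?thesis using assms(2) by (simp add: field_simps)
qed

lemma sum_inverse_diff_strict_decreasing:
  fixes c :: "'b \<Rightarrow> real"
  assumes "finite A" "A \<noteq> {}" "s < t" "\<And>k. k \<in> A \<Longrightarrow> c k < s \<or> t < c k"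
  shows "(\<Sum>k\<in>A. 1 / (t - c k)) < (\<Sum>k\<in>A. 1 / (s - c k))"
proof (rule sum_strict_mono[OF assms(1,2)])
  fix k assume "k \<in> A"
  then consider "c k < s" | "t < c k" using assms(4) by blast
  then show "1 / (t - c k) < 1 / (s - c k)"
    using \<open>s < t\<close> less_imp_inverse_less[of "s - c k" "t - c k"]
      less_imp_inverse_less_neg[of "s - c k" "t - c k"]
    by cases (simp_all add: inverse_eq_divide)
qed

lemma critical_point_in_gap:
  assumes mono: "antimono_on {1..m} c" and "interlacing m c p" "critical_points m c p"
    and j: "j \<in> {1..m-1}" and gap: "c (Suc j) < c j"
  shows "c (Suc j) < p j" "p j < c j" "poly (pderiv (\<Prod>k=1..m. [:- c k, 1:])) (p j) = 0"
proof -
  define Q where "Q = (\<Prod>k=1..m. [:- c k, 1:])"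
  have "poly Q (c (Suc j)) = 0" "poly Q (c j) = 0"
    using j by (auto simp: Q_def poly_prod_linear_eq_0_iff)
  then obtain x where x: "c (Suc j) < x" "x < c j" "poly (pderiv Q) x = 0"
    using poly_pderiv_root_between[OF gap] by blast
  have "m \<noteq> 0" using j by auto
  with x(3) obtain k where k: "k \<in> {1..m-1}" "x = p k"
    using \<open>critical_points m c p\<close> by (auto simp: critical_points_def Q_def poly_prod_linear_eq_0_iff)
  then have "x = p j"
    using antimono_gap_index_unique[OF mono j k(1) x(1,2)] \<open>interlacing m c p\<close>
    by (auto simp: interlacing_def)
  with x show "c (Suc j) < p j" "p j < c j" "poly (pderiv (\<Prod>k=1..m. [:- c k, 1:])) (p j) = 0"
    by (simp_all add: Q_def)
qed

(* On the gap the logarithmic derivative of the product of the [:- c k, 1:] is strictly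
   decreasing, and it vanishes at p j. *)
lemma le_critical_point_iff:
  assumes mono: "antimono_on {1..m} c" and "interlacing m c p" "critical_points m c p"
    and j: "j \<in> {1..m-1}" and t: "c (Suc j) < t" "t < c j"
  shows "t \<le> p j \<longleftrightarrow> 0 \<le> (\<Sum>k=1..m. 1 / (t - c k))"
proof -
  define F where "F s = (\<Sum>k=1..m. 1 / (s - c k))" for s
  have outside: "c k \<le> c (Suc j) \<or> c j \<le> c k" if "k \<in> {1..m}" for k
    using antimono_outside_gap[OF mono j that] .
  have root: "c (Suc j) < p j" "p j < c j" "poly (pderiv (\<Prod>k=1..m. [:- c k, 1:])) (p j) = 0"
    using critical_point_in_gap[OF assms(1-4)] t by auto
  have "poly (\<Prod>k=1..m. [:- c k, 1:]) (p j) \<noteq> 0"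
    using outside root(1,2) by (force simp: poly_prod_linear_eq_0_iff)
  then have "F (p j) = 0"
    using root(3) poly_pderiv_prod_linear[of "{1..m}" c "p j"] by (simp add: F_def)
  have "m \<noteq> 0" using j by auto
  have decreasing: "F s' < F s" if s: "c (Suc j) < s" "s < s'" "s' < c j" for s s'
    unfolding F_def
  proof (rule sum_inverse_diff_strict_decreasing)
    show "c k < s \<or> s' < c k" if "k \<in> {1..m}" for k
      using outside[OF that] s by auto
  qed (use \<open>m \<noteq> 0\<close> s in auto)
  consider "t < p j" | "t = p j" | "p j < t" by linarith
  then show ?thesis
  proof cases
    case 1
    then show ?thesis using decreasing[of t "p j"] t root \<open>F (p j) = 0\<close> by (simp add: F_def)
  next
    case 2
    then show ?thesis using \<open>F (p j) = 0\<close> by (simp add: F_def)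
  next
    case 3
    then show ?thesis using decreasing[of "p j" t] t root \<open>F (p j) = 0\<close> by (simp add: F_def)
  qed
qed

lemma critical_point_le_if_sum_inverse_diff_le:
  assumes c: "antimono_on {1..m} c" "interlacing m c p" "critical_points m c p" "j \<in> {1..m-1}"
    and c': "antimono_on {1..m'} c'" "interlacing m' c' p'" "critical_points m' c' p'" "j' \<in> {1..m'-1}"
    and gap: "c' j' = c j" "c' (Suc j') = c (Suc j)"
    and le: "\<And>t. c (Suc j) < t \<Longrightarrow> t < c j \<Longrightarrow>
               (\<Sum>k=1..m. 1 / (t - c k)) \<le> (\<Sum>k=1..m'. 1 / (t - c' k))"
  shows "p j \<le> p' j'"
proof (rule ccontr)
  assume "\<not> p j \<le> p' j'"
  define t where "t = (p j + p' j') / 2"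
  have "p' j' < t" "t < p j" using \<open>\<not> p j \<le> p' j'\<close> by (auto simp: t_def)
  moreover have "c' (Suc j') \<le> p' j'" "p j \<le> c j"
    using c(2,4) c'(2,4) by (auto simp: interlacing_def)
  ultimately have t: "c (Suc j) < t" "t < c j" using gap by auto
  have "0 \<le> (\<Sum>k=1..m. 1 / (t - c k))"
    using le_critical_point_iff[OF c t] \<open>t < p j\<close> by simp
  moreover have t': "c' (Suc j') < t" "t < c' j'" using t gap by simp_all
  then have "\<not> 0 \<le> (\<Sum>k=1..m'. 1 / (t - c' k))"
    using le_critical_point_iff[OF c' t'] \<open>p' j' < t\<close> by simp
  ultimately show False using le[OF t] by simp
qed

lemma sum_critical_points_from_ge:
  assumes "interlacing m c p" "critical_points m c p" "m \<ge> 2" "1 \<le> l" "l \<le> m"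
  shows "(real m - 1) / real m * (\<Sum>k=1..m. c k) - (\<Sum>k=1..l-1. c k) \<le> (\<Sum>k=l..m-1. p k)"
proof -
  have "(\<Sum>k=1..l-1. p k) \<le> (\<Sum>k=1..l-1. c k)"
    using assms(1,5) by (intro sum_mono) (auto simp: interlacing_def)
  moreover have "(\<Sum>k=1..m-1. p k) = (\<Sum>k=1..l-1. p k) + (\<Sum>k=l..m-1. p k)"
    using assms(4,5) sum_atLeastAtMost_split[of 1 "l-1" "m-1" p] by simp
  ultimately show ?thesis using sum_critical_points[OF assms(2,3)] by linarith
qed

lemma sum_critical_points_upto_le:
  assumes "interlacing m c p" "critical_points m c p" "m \<ge> 2" "d \<le> m - 1"
  shows "(\<Sum>k=1..d. p k) \<le> (real m - 1) / real m * (\<Sum>k=1..m. c k) - (\<Sum>k=d+2..m. c k)"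
proof -
  have "(\<Sum>k=d+2..m. c k) = (\<Sum>k=d+1..m-1. c (Suc k))"
    using sum.shift_bounds_cl_Suc_ivl[of c "d+1" "m-1"] assms(3) by simp
  also have "\<dots> \<le> (\<Sum>k=d+1..m-1. p k)"
    using assms(1) by (intro sum_mono) (auto simp: interlacing_def)
  moreover have "(\<Sum>k=1..m-1. p k) = (\<Sum>k=1..d. p k) + (\<Sum>k=d+1..m-1. p k)"
    using assms(4) sum_atLeastAtMost_split[of 1 d "m-1" p] by simp
  ultimately show ?thesis using sum_critical_points[OF assms(2,3)] by linarith
qed

lemma inverse_diff_mono:
  fixes t x y :: real
  assumes "x \<le> y" "y < t \<or> t < x"
  shows "1 / (t - x) \<le> 1 / (t - y)"
  using assms le_imp_inverse_le[of "t - y" "t - x"] le_imp_inverse_le_neg[of "t - y" "t - x"]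
  by (auto simp: inverse_eq_divide)

lemma sum_inverse_diff_raise_prefix_le:
  fixes lam :: "nat \<Rightarrow> real"
  assumes lam: "antimono_on {1..n} lam" and "1 \<le> l" "l \<le> j" "j \<le> r" "r < n"
    and t: "lam (Suc j) < t" "t < lam j"
  shows "(\<Sum>k=1..r+1. 1 / (t - lam (max k l))) \<le> (\<Sum>k=1..n. 1 / (t - lam k))"
proof -
  have "(\<Sum>k=1..r+1. 1 / (t - lam (max k l))) \<le> (\<Sum>k=1..r+1. 1 / (t - lam k))"
  proof (rule sum_mono)
    fix k assume k: "k \<in> {1..r+1}"
    show "1 / (t - lam (max k l)) \<le> 1 / (t - lam k)"
    proof (cases "k \<le> l")
      case True
      then have "lam l \<le> lam k" "lam j \<le> lam l"
        using k assms(2-5) by (auto intro!: monotone_onD[OF lam])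
      then show ?thesis using True t by (intro inverse_diff_mono) auto
    qed simp
  qed
  also have "\<dots> \<le> (\<Sum>k=1..r+1. 1 / (t - lam k)) + (\<Sum>k=r+2..n. 1 / (t - lam k))"
  proof -
    have "0 \<le> 1 / (t - lam k)" if "k \<in> {r+2..n}" for k
    proof -
      have "lam k \<le> lam (Suc j)"
        using that assms(2-5) by (auto intro!: monotone_onD[OF lam])
      then show ?thesis using t by simp
    qed
    then have "0 \<le> (\<Sum>k=r+2..n. 1 / (t - lam k))" by (rule sum_nonneg)
    then show ?thesis by simp
  qed
  also have "\<dots> = (\<Sum>k=1..n. 1 / (t - lam k))"
    using sum_atLeastAtMost_split[of 1 "r+1" n "\<lambda>k. 1 / (t - lam k)"] assms(5) by simp
  finally show ?thesis .
qed

lemma sum_inverse_diff_le_flatten_suffix: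
  fixes lam :: "nat \<Rightarrow> real"
  assumes lam: "antimono_on {1..n} lam" and "1 \<le> l" "l \<le> j" "j \<le> r" "r < n"
    and t: "lam (Suc j) < t" "t < lam j"
  shows "(\<Sum>k=1..n. 1 / (t - lam k)) \<le> (\<Sum>k=1..n-l+1. 1 / (t - lam (min (k+l-1) (r+1))))"
proof -
  have "(\<Sum>k=1..n. 1 / (t - lam k)) = (\<Sum>k=1..l-1. 1 / (t - lam k)) + (\<Sum>k=l..n. 1 / (t - lam k))"
    using sum_atLeastAtMost_split[of 1 "l-1" n "\<lambda>k. 1 / (t - lam k)"] assms(2-5) by simp
  also have "\<dots> \<le> (\<Sum>k=l..n. 1 / (t - lam k))"
  proof -
    have "1 / (t - lam k) \<le> 0" if "k \<in> {1..l-1}" for k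
    proof -
      have "lam j \<le> lam k"
        using that assms(2-5) by (auto intro!: monotone_onD[OF lam])
      then show ?thesis using t by simp
    qed
    then have "(\<Sum>k=1..l-1. 1 / (t - lam k)) \<le> 0" by (rule sum_nonpos)
    then show ?thesis by simp
  qed
  also have "\<dots> = (\<Sum>k=1..n-l+1. 1 / (t - lam (k+l-1)))"
    using sum.shift_bounds_cl_nat_ivl[of "\<lambda>k. 1 / (t - lam k)" 1 "l-1" "n-l+1"] assms(2-5) by simp
  also have "\<dots> \<le> (\<Sum>k=1..n-l+1. 1 / (t - lam (min (k+l-1) (r+1))))"
  proof (rule sum_mono)
    fix k assume k: "k \<in> {1..n-l+1}"
    show "1 / (t - lam (k+l-1)) \<le> 1 / (t - lam (min (k+l-1) (r+1)))"
    proof (cases "r + 1 \<le> k + l - 1")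
      case True
      then have "lam (k+l-1) \<le> lam (r+1)" "lam (r+1) \<le> lam (Suc j)"
        using k assms(2-5) by (auto intro!: monotone_onD[OF lam])
      then show ?thesis using True t by (intro inverse_diff_mono) auto
    qed simp
  qed
  finally show ?thesis .
qed

lemma critical_points_raise_prefix_le:
  fixes lam mu :: "nat \<Rightarrow> real"
  assumes lam: "antimono_on {1..n} lam" and mu: "interlacing n lam mu" "critical_points n lam mu"
    and l: "1 \<le> l" "l \<le> r" "r < n"
  obtains nu where "interlacing (r+1) (\<lambda>k. lam (max k l)) nu"
    and "critical_points (r+1) (\<lambda>k. lam (max k l)) nu"
    and "\<And>j. j \<in> {l..r} \<Longrightarrow> nu j \<le> mu j"
proof -
  define c where "c = (\<lambda>k. lam (max k l))"
  have c_mono: "antimono_on {1..r+1} c"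
    using l by (auto simp: c_def monotone_on_def intro!: monotone_onD[OF lam])
  obtain nu where nu: "interlacing (r+1) c nu" "critical_points (r+1) c nu"
    using critical_points_exist[OF c_mono] by blast
  have "nu j \<le> mu j" if j: "j \<in> {l..r}" for j
  proof (rule critical_point_le_if_sum_inverse_diff_le[OF c_mono nu _ lam mu])
    show "j \<in> {1..r+1-1}" "j \<in> {1..n-1}" using j l by auto
    show "lam j = c j" "lam (Suc j) = c (Suc j)" using j by (simp_all add: c_def)
    show "(\<Sum>k=1..r+1. 1 / (t - c k)) \<le> (\<Sum>k=1..n. 1 / (t - lam k))"
      if "c (Suc j) < t" "t < c j" for t
      using sum_inverse_diff_raise_prefix_le[OF lam l(1), of j r t] that j l by (simp add: c_def)
  qed
  with nu show ?thesis using that unfolding c_def by blast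
qed

lemma critical_points_flatten_suffix_ge:
  fixes lam mu :: "nat \<Rightarrow> real"
  assumes lam: "antimono_on {1..n} lam" and mu: "interlacing n lam mu" "critical_points n lam mu"
    and l: "1 \<le> l" "l \<le> r" "r < n"
  obtains rho where "interlacing (n-l+1) (\<lambda>k. lam (min (k+l-1) (r+1))) rho"
    and "critical_points (n-l+1) (\<lambda>k. lam (min (k+l-1) (r+1))) rho"
    and "\<And>j. j \<in> {l..r} \<Longrightarrow> mu j \<le> rho (j - l + 1)"
proof -
  define c where "c = (\<lambda>k. lam (min (k+l-1) (r+1)))"
  have c_mono: "antimono_on {1..n-l+1} c"
    using l by (auto simp: c_def monotone_on_def intro!: monotone_onD[OF lam])
  obtain rho where rho: "interlacing (n-l+1) c rho" "critical_points (n-l+1) c rho"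
    using critical_points_exist[OF c_mono] by blast
  have "mu j \<le> rho (j - l + 1)" if j: "j \<in> {l..r}" for j
  proof (rule critical_point_le_if_sum_inverse_diff_le[OF lam mu _ c_mono rho])
    show "j \<in> {1..n-1}" "j - l + 1 \<in> {1..n-l+1-1}" using j l by auto
    show "c (j - l + 1) = lam j" "c (Suc (j - l + 1)) = lam (Suc j)" using j l by (auto simp: c_def)
    show "(\<Sum>k=1..n. 1 / (t - lam k)) \<le> (\<Sum>k=1..n-l+1. 1 / (t - c k))"
      if "lam (Suc j) < t" "t < lam j" for t
      using sum_inverse_diff_le_flatten_suffix[OF lam l(1), of j r t] that j l by (simp add: c_def)
  qed
  with rho show ?thesis using that unfolding c_def by blast
qed

lemma sum_critical_points_lower_bound:
  fixes lam mu :: "nat \<Rightarrow> real"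
  assumes lam: "antimono_on {1..n} lam" and mu: "interlacing n lam mu" "critical_points n lam mu"
    and l: "1 \<le> l" "l \<le> r" "r \<le> n - 1"
  shows "(\<Sum>j=l..r. lam (j+1)) + (1 / real (r+1)) * (\<Sum>j=l..r. lam l - lam (j+1))
           \<le> (\<Sum>j=l..r. mu j)"
proof -
  have "r < n" using l by linarith
  define c where "c = (\<lambda>k. lam (max k l))"
  define S where "S = (\<Sum>j=l..r. lam (j+1))"
  obtain nu where nu: "interlacing (r+1) c nu" "critical_points (r+1) c nu"
    and nu_le: "\<And>j. j \<in> {l..r} \<Longrightarrow> nu j \<le> mu j"
    using critical_points_raise_prefix_le[OF lam mu l(1,2) \<open>r < n\<close>] unfolding c_def by blast
  have "(\<Sum>k=1..r+1. c k) = (\<Sum>k=1..l. c k) + (\<Sum>k=l+1..r+1. c k)"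
    by (rule sum_atLeastAtMost_split) (use l in simp_all)
  also have "(\<Sum>k=1..l. c k) = real l * lam l"
    by (simp add: c_def)
  also have "(\<Sum>k=l+1..r+1. c k) = S"
    using sum.shift_bounds_cl_nat_ivl[of c l 1 r] by (simp add: c_def S_def)
  finally have sum_c: "(\<Sum>k=1..r+1. c k) = real l * lam l + S" .
  have "(\<Sum>k=1..l-1. c k) = (\<Sum>k=1..l-1. lam l)"
    by (rule sum.cong) (auto simp: c_def)
  then have "(\<Sum>k=1..l-1. c k) = (real l - 1) * lam l"
    using l by (simp add: of_nat_diff)
  with sum_c have "(real (r+1) - 1) / real (r+1) * (real l * lam l + S) - (real l - 1) * lam l
      \<le> (\<Sum>j=l..r. nu j)"
    using sum_critical_points_from_ge[OF nu, of l] l by simp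
  also have "\<dots> \<le> (\<Sum>j=l..r. mu j)"
    using nu_le by (rule sum_mono)
  moreover have "(\<Sum>j=l..r. lam l - lam (j+1)) = (real r + 1 - real l) * lam l - S"
    using l by (simp add: S_def sum_subtractf of_nat_diff)
  then have "S + 1 / real (r+1) * (\<Sum>j=l..r. lam l - lam (j+1))
      = (real (r+1) - 1) / real (r+1) * (real l * lam l + S) - (real l - 1) * lam l"
    by (simp add: field_simps)
  ultimately show ?thesis
    unfolding S_def by linarith
qed

lemma sum_critical_points_upper_bound:
  fixes lam mu :: "nat \<Rightarrow> real"
  assumes lam: "antimono_on {1..n} lam" and mu: "interlacing n lam mu" "critical_points n lam mu"
    and l: "1 \<le> l" "l \<le> r" "r \<le> n - 1"
  shows "(\<Sum>j=l..r. mu j)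
           \<le> (\<Sum>j=l..r. lam j) - (1 / real (n-l+1)) * (\<Sum>j=l..r. lam j - lam (r+1))"
proof -
  have "r < n" using l by linarith
  define m where "m = n - l + 1"
  define d where "d = r - l + 1"
  define c where "c = (\<lambda>k. lam (min (k+l-1) (r+1)))"
  define T where "T = (\<Sum>j=l..r. lam j)"
  obtain rho where rho: "interlacing m c rho" "critical_points m c rho"
    and le_rho: "\<And>j. j \<in> {l..r} \<Longrightarrow> mu j \<le> rho (j - l + 1)"
    using critical_points_flatten_suffix_ge[OF lam mu l(1,2) \<open>r < n\<close>] unfolding c_def m_def by blast
  have "(\<Sum>k=1..d. c k) = (\<Sum>k=1..d. lam (k + (l - 1)))"
    by (rule sum.cong) (use l in \<open>auto simp: c_def d_def min_def\<close>)
  also have "\<dots> = T"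
    using sum.shift_bounds_cl_nat_ivl[of lam 1 "l-1" d, symmetric] l by (simp add: T_def d_def)
  finally have sum_head: "(\<Sum>k=1..d. c k) = T" .
  have tail: "(\<Sum>k=a..m. c k) = real (m + 1 - a) * lam (r+1)" if "d < a" for a
  proof -
    have "(\<Sum>k=a..m. c k) = (\<Sum>k=a..m. lam (r+1))"
      by (rule sum.cong)
        (use l that in \<open>auto simp: c_def d_def min_def intro!: arg_cong[where f = lam]\<close>)
    then show ?thesis by simp
  qed
  have "(\<Sum>k=1..m. c k) = (\<Sum>k=1..d. c k) + (\<Sum>k=d+1..m. c k)"
    by (rule sum_atLeastAtMost_split) (use l \<open>r < n\<close> in \<open>simp_all add: d_def m_def\<close>)
  also have "\<dots> = T + (real n - real r) * lam (r+1)"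
    using sum_head tail[of "d+1"] l \<open>r < n\<close> by (simp add: d_def m_def of_nat_diff)
  finally have sum_c: "(\<Sum>k=1..m. c k) = T + (real n - real r) * lam (r+1)" .
  have "real (m + 1 - (d + 2)) = real n - real r - 1"
    using l \<open>r < n\<close> by (simp add: d_def m_def of_nat_diff)
  then have sum_tail: "(\<Sum>k=d+2..m. c k) = (real n - real r - 1) * lam (r+1)"
    using tail[of "d+2"] by simp
  have "(\<Sum>j=l..r. mu j) \<le> (\<Sum>j=l..r. rho (j - l + 1))"
    using le_rho by (rule sum_mono)
  also have "\<dots> = (\<Sum>k=1..d. rho k)"
    using sum.shift_bounds_cl_nat_ivl[of "\<lambda>j. rho (j - l + 1)" 1 "l-1" d] l by (simp add: d_def)
  also have "\<dots> \<le> (real m - 1) / real m * (\<Sum>k=1..m. c k) - (\<Sum>k=d+2..m. c k)"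
    by (rule sum_critical_points_upto_le[OF rho])
      (use l \<open>r < n\<close> in \<open>simp_all add: m_def d_def\<close>)
  also have "\<dots> = T - (1 / real m) * (T - (real r - real l + 1) * lam (r+1))"
    unfolding sum_c sum_tail using l \<open>r < n\<close> by (simp add: m_def of_nat_diff field_simps)
  also have "T - (real r - real l + 1) * lam (r+1) = (\<Sum>j=l..r. lam j - lam (r+1))"
    using l by (simp add: T_def sum_subtractf of_nat_diff)
  finally show ?thesis
    unfolding T_def m_def .
qed

theorem proposition2p4:
  fixes n :: nat and lam mu :: "nat \<Rightarrow> real" and l r :: nat
  assumes "n \<ge> 2"
    and lam_mono: "\<And>i j. 1 \<le> i \<Longrightarrow> i \<le> j \<Longrightarrow> j \<le> n \<Longrightarrow> lam j \<le> lam i"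
    and mu_mono: "\<And>i j. 1 \<le> i \<Longrightarrow> i \<le> j \<Longrightarrow> j \<le> n - 1 \<Longrightarrow> mu j \<le> mu i"
    and crit: "pderiv (\<Prod>j=1..n. [:- lam j, 1:])
               = smult (of_nat n) (\<Prod>j=1..n-1. [:- mu j, 1:])"
    and "1 \<le> l" and "l \<le> r" and "r \<le> n - 1"
  shows "(\<Sum>j=l..r. lam (j+1)) + (1 / real (r+1)) * (\<Sum>j=l..r. lam l - lam (j+1))
           \<le> (\<Sum>j=l..r. mu j)
       \<and> (\<Sum>j=l..r. mu j)
           \<le> (\<Sum>j=l..r. lam j) - (1 / real (n-l+1)) * (\<Sum>j=l..r. lam j - lam (r+1))"
proof -
  have lam: "antimono_on {1..n} lam"
    by (auto intro!: monotone_onI lam_mono)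
  moreover have "antimono_on {1..n-1} mu"
    by (auto intro!: monotone_onI mu_mono)
  moreover have "critical_points n lam mu"
    using crit by (simp add: critical_points_def)
  ultimately have "interlacing n lam mu"
    by (rule critical_points_interlacing)
  with lam \<open>critical_points n lam mu\<close> assms(5-7) show ?thesis
    using sum_critical_points_lower_bound sum_critical_points_upper_bound by blast
qed

end
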